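(* Let $G$ be a graph with $\operatorname{diam}(\overline{G})=2$. Then $\gamma(G)=2$ if and only if $pav(\overline{G},0)>0$.
   Context: All graphs are finite, simple and undirected; $\overline{G}$ is the complement, $\operatorname{diam}$ the diameter and $\gamma$ the domination number. For a graph $F$ and integer $i\ge 0$, $pav(F,i)$ is the number of pairs of adjacent vertices of $F$ joined by exactly $i$ paths of length two (equivalently, having exactly $i$ common neighbours). *)

theory Defs
  imports Main "HOL-Library.Extended_Nat"
begin

definition graph :: "'a set \<Rightarrow> ('a \<Rightarrow> 'a \<Rightarrow> bool) \<Rightarrow> bool" where
  "graph V E \<longleftrightarrow> finite V \<and> (\<forall>x y. E x y \<longrightarrow> x \<in> V \<and> y \<in> V \<and> x \<noteq> y \<and> E y x)"

definition compl_graph :: "'a set \<Rightarrow> ('a \<Rightarrow> 'a \<Rightarrow> bool) \<Rightarrow> 'a \<Rightarrow> 'a \<Rightarrow> bool" where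
  "compl_graph V E = (\<lambda>x y. x \<in> V \<and> y \<in> V \<and> x \<noteq> y \<and> \<not> E x y)"

definition gdist :: "'a set \<Rightarrow> ('a \<Rightarrow> 'a \<Rightarrow> bool) \<Rightarrow> 'a \<Rightarrow> 'a \<Rightarrow> enat" where
  "gdist V E u v =
     (if \<exists>n. ((\<lambda>x y. x \<in> V \<and> y \<in> V \<and> E x y) ^^ n) u v
      then enat (LEAST n. ((\<lambda>x y. x \<in> V \<and> y \<in> V \<and> E x y) ^^ n) u v)
      else \<infinity>)"

definition diam :: "'a set \<Rightarrow> ('a \<Rightarrow> 'a \<Rightarrow> bool) \<Rightarrow> enat" where
  "diam V E = Sup ((\<lambda>(u, v). gdist V E u v) ` (V \<times> V))"

definition dominating :: "'a set \<Rightarrow> ('a \<Rightarrow> 'a \<Rightarrow> bool) \<Rightarrow> 'a set \<Rightarrow> bool" where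
  "dominating V E D \<longleftrightarrow> D \<subseteq> V \<and> (\<forall>v\<in>V. v \<in> D \<or> (\<exists>u\<in>D. E u v))"

definition domination_number :: "'a set \<Rightarrow> ('a \<Rightarrow> 'a \<Rightarrow> bool) \<Rightarrow> nat" where
  "domination_number V E = (LEAST k. \<exists>D. dominating V E D \<and> card D = k)"

definition pav :: "'a set \<Rightarrow> ('a \<Rightarrow> 'a \<Rightarrow> bool) \<Rightarrow> nat \<Rightarrow> nat" where
  "pav V E i = card {{u, v} | u v. E u v \<and> card {w \<in> V. E u w \<and> E v w} = i}"

end

theory Submission
  imports Defs
begin

text \<open>In the complement \<open>H\<close>, a pair \<open>{a, b}\<close> dominates \<open>G\<close> exactly when \<open>a\<close> and \<open>b\<close>
have no common \<open>H\<close>-neighbour, and a single vertex never dominates because diameter 2 gives it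
an \<open>H\<close>-neighbour; so \<open>\<gamma>(G) = 2\<close> iff some two vertices have no common \<open>H\<close>-neighbour. Since
\<open>diam H = 2\<close>, such vertices must be \<open>H\<close>-adjacent, which makes them an edge counted by
\<open>pav(H, 0)\<close>.\<close>

lemma gdist_le_diam:
  assumes "u \<in> V" "v \<in> V"
  shows "gdist V F u v \<le> diam V F"
  unfolding diam_def by (rule Sup_upper) (use assms in auto)

lemma gdist_le_2_imp_adjacent_or_common_neighbour:
  assumes "gdist V F u v \<le> 2" "u \<noteq> v"
  shows "F u v \<or> (\<exists>w. F u w \<and> F w v)"
proof -
  let ?R = "\<lambda>x y. x \<in> V \<and> y \<in> V \<and> F x y"
  have ex: "\<exists>n. (?R ^^ n) u v"
    using assms(1) unfolding gdist_def by (auto split: if_splits)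
  define n where "n = (LEAST n. (?R ^^ n) u v)"
  have walk: "(?R ^^ n) u v"
    unfolding n_def by (rule LeastI_ex[OF ex])
  have "gdist V F u v = enat n"
    unfolding gdist_def n_def using ex by simp
  with assms(1) have "n \<le> 2"
    by (simp add: numeral_eq_enat)
  then consider "n = 0" | "n = 1" | "n = 2"
    by linarith
  then show ?thesis
    by cases (use walk assms(2) in \<open>auto simp: numeral_2_eq_2 relcompp.simps\<close>)
qed

lemma diam_singleton: "diam {a} F = 0"
proof -
  let ?R = "\<lambda>x y. x \<in> {a} \<and> y \<in> {a} \<and> F x y"
  have ex: "\<exists>n. (?R ^^ n) a a"
    by (rule exI[of _ 0]) simp
  have "(LEAST n. (?R ^^ n) a a) = 0"
    by (rule Least_eq_0) simp
  then have "gdist {a} F a a = 0"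
    unfolding gdist_def using ex by (simp only: if_True zero_enat_def)
  then show ?thesis
    unfolding diam_def by simp
qed

lemma diam_eq_2_nonempty:
  assumes "diam V F = 2"
  shows "V \<noteq> {}"
  using assms unfolding diam_def by (auto simp: bot_enat_def)

lemma diam_eq_2_adjacent_or_common_neighbour:
  assumes "diam V F = 2" "u \<in> V" "v \<in> V" "u \<noteq> v"
  shows "F u v \<or> (\<exists>w. F u w \<and> F w v)"
  using gdist_le_diam[OF assms(2,3), of F] assms(1,4)
  by (intro gdist_le_2_imp_adjacent_or_common_neighbour) auto

lemma diam_eq_2_ex_neighbour:
  assumes "diam V F = 2" "a \<in> V"
  shows "\<exists>b. F a b"
proof -
  have "V \<noteq> {a}"
    using assms(1) diam_singleton[of a F] by auto
  then obtain b where "b \<in> V" "b \<noteq> a"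
    using assms(2) by blast
  then show ?thesis
    using diam_eq_2_adjacent_or_common_neighbour[OF assms, of b] by blast
qed

lemma symp_compl_graph:
  assumes "graph V E"
  shows "symp (compl_graph V E)"
  using assms unfolding graph_def compl_graph_def symp_def by blast

lemma dominating_pair_iff_no_common_compl_neighbour:
  assumes "a \<in> V" "b \<in> V"
  shows "dominating V E {a, b} \<longleftrightarrow> \<not> (\<exists>w. compl_graph V E a w \<and> compl_graph V E b w)"
  using assms unfolding dominating_def compl_graph_def by auto

lemma domination_number_eq_iff:
  assumes "\<And>D. dominating V E D \<Longrightarrow> k \<le> card D"
  shows "domination_number V E = k \<longleftrightarrow> (\<exists>D. dominating V E D \<and> card D = k)"
proof
  have "dominating V E V"
    unfolding dominating_def by auto
  have "\<exists>D. dominating V E D \<and> card D = domination_number V E"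
    unfolding domination_number_def by (rule LeastI_ex) (use \<open>dominating V E V\<close> in blast)
  then show "domination_number V E = k \<Longrightarrow> \<exists>D. dominating V E D \<and> card D = k"
    by simp
next
  assume "\<exists>D. dominating V E D \<and> card D = k"
  then show "domination_number V E = k"
    unfolding domination_number_def by (rule Least_equality) (use assms in blast)
qed

lemma pav_0_pos_iff:
  assumes "finite V" "\<And>x y. F x y \<Longrightarrow> x \<in> V \<and> y \<in> V"
  shows "pav V F 0 > 0 \<longleftrightarrow> (\<exists>u v. F u v \<and> \<not> (\<exists>w. F u w \<and> F v w))"
proof -
  let ?P = "{{u, v} | u v. F u v \<and> card {w \<in> V. F u w \<and> F v w} = 0}"
  have "?P \<subseteq> Pow V"
    using assms(2) by auto
  then have "finite ?P"
    using assms(1) by (simp add: finite_subset)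
  then have "pav V F 0 > 0 \<longleftrightarrow> ?P \<noteq> {}"
    unfolding pav_def by (simp add: card_gt_0_iff)
  moreover have "card {w \<in> V. F u w \<and> F v w} = 0 \<longleftrightarrow> \<not> (\<exists>w. F u w \<and> F v w)" for u v
    using assms by auto
  ultimately show ?thesis
    by auto
qed

context
  fixes V :: "'a set" and E :: "'a \<Rightarrow> 'a \<Rightarrow> bool"
  assumes graph: "graph V E"
    and diam_compl: "diam V (compl_graph V E) = 2"
begin

lemma two_le_card_dominating:
  assumes "dominating V E D"
  shows "2 \<le> card D"
proof (rule ccontr)
  assume "\<not> 2 \<le> card D"
  moreover have "finite D"
    using assms graph unfolding dominating_def graph_def by (blast intro: finite_subset)
  ultimately consider "D = {}" | a where "D = {a}"
    by (metis One_nat_def card_1_singletonE card_0_eq less_2_cases not_le)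
  then show False
  proof cases
    case 1
    then show False
      using assms diam_eq_2_nonempty[OF diam_compl] unfolding dominating_def by auto
  next
    case (2 a)
    then have "a \<in> V"
      using assms unfolding dominating_def by auto
    then show False
      using assms 2 diam_eq_2_ex_neighbour[OF diam_compl]
        dominating_pair_iff_no_common_compl_neighbour[of a V a E]
      by auto
  qed
qed

lemma ex_dominating_pair_iff:
  "(\<exists>D. dominating V E D \<and> card D = 2) \<longleftrightarrow>
    (\<exists>u v. compl_graph V E u v \<and> \<not> (\<exists>w. compl_graph V E u w \<and> compl_graph V E v w))"
  (is "?dom \<longleftrightarrow> ?edge")
proof
  assume ?dom
  then obtain a b where ab: "dominating V E {a, b}" "a \<noteq> b"
    by (auto simp: card_2_iff)
  then have "a \<in> V" "b \<in> V"
    unfolding dominating_def by auto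
  with ab have "\<not> (\<exists>w. compl_graph V E a w \<and> compl_graph V E b w)"
    by (simp add: dominating_pair_iff_no_common_compl_neighbour)
  moreover from this have "compl_graph V E a b"
    using diam_eq_2_adjacent_or_common_neighbour[OF diam_compl \<open>a \<in> V\<close> \<open>b \<in> V\<close> ab(2)]
      symp_compl_graph[OF graph] by (blast dest: sympD)
  ultimately show ?edge
    by blast
next
  assume ?edge
  then obtain a b where "compl_graph V E a b" "\<not> (\<exists>w. compl_graph V E a w \<and> compl_graph V E b w)"
    by blast
  moreover from this have "a \<in> V" "b \<in> V" "a \<noteq> b"
    unfolding compl_graph_def by auto
  ultimately show ?dom
    by (intro exI[of _ "{a, b}"]) (simp add: dominating_pair_iff_no_common_compl_neighbour)
qed

end

theorem lemma9:
  fixes V :: "'a set" and E :: "'a \<Rightarrow> 'a \<Rightarrow> bool"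
  assumes "graph V E"
    and "diam V (compl_graph V E) = 2"
  shows "domination_number V E = 2 \<longleftrightarrow> pav V (compl_graph V E) 0 > 0"
proof -
  have "domination_number V E = 2 \<longleftrightarrow> (\<exists>D. dominating V E D \<and> card D = 2)"
    using two_le_card_dominating[OF assms] by (rule domination_number_eq_iff)
  also have "\<dots> \<longleftrightarrow> pav V (compl_graph V E) 0 > 0"
  proof (subst pav_0_pos_iff)
    show "finite V"
      using assms(1) by (simp add: graph_def)
    show "\<And>x y. compl_graph V E x y \<Longrightarrow> x \<in> V \<and> y \<in> V"
      by (simp add: compl_graph_def)
  qed (rule ex_dominating_pair_iff[OF assms])
  finally show ?thesis .
qed

end
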